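(* Let $(X_1,X_2,A)\in\mathbb R\times\mathbb R\times\mathbb R\subset\mathbb C^2\times\mathbb R$ (i.e. $X_1,X_2$ real) satisfy $$-2\,\mathrm{Re}(X_1+X_2)-2\,\mathrm{Re}\bigl(X_1\overline{X}_2e^{-2iA}\bigr)+|X_1|^2+|X_2|^2+1=0$$ and $-\pi/2\le A\le\pi/2$. Then $\mathrm{Re}(X_1e^{-iA})\ge0$. *)

theory Defs
  imports Complex_Main
begin

end

theory Submission
  imports Defs
begin

text \<open>With \<open>c = cos A \<ge> 0\<close> the constraint becomes a real quadratic in \<open>X\<^sub>2\<close>; completing
  the square expresses its discriminant as \<open>4 X\<^sub>1 c\<^sup>2 (2 - 2 X\<^sub>1 (1 - c\<^sup>2))\<close>, which is negative
  when \<open>X\<^sub>1 < 0 < c\<close>. Hence a real solution forces \<open>X\<^sub>1 c \<ge> 0\<close>, i.e.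
  \<open>Re (X\<^sub>1 e\<^sup>-\<^sup>i\<^sup>A) \<ge> 0\<close>.\<close>

lemma constraint_square_form:
  fixes x y c :: real
  assumes "- 2 * x - 2 * y - 2 * x * y * (2 * c\<^sup>2 - 1) + x\<^sup>2 + y\<^sup>2 + 1 = 0"
  shows "(y - (1 + x * (2 * c\<^sup>2 - 1)))\<^sup>2 = 2 * x * c\<^sup>2 * (2 - 2 * x * (1 - c\<^sup>2))"
  using assms by (simp add: algebra_simps power2_eq_square)

lemma constraint_imp_mult_nonneg:
  fixes x y c :: real
  assumes eq: "- 2 * x - 2 * y - 2 * x * y * (2 * c\<^sup>2 - 1) + x\<^sup>2 + y\<^sup>2 + 1 = 0"
    and c_nonneg: "0 \<le> c" and c_le: "c \<le> 1"
  shows "0 \<le> x * c"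
proof (rule ccontr)
  assume "\<not> 0 \<le> x * c"
  with c_nonneg have x_neg: "x < 0" and c_pos: "0 < c"
    by (auto simp: not_le mult_less_0_iff)
  have "c\<^sup>2 \<le> 1"
    using c_nonneg c_le by (simp add: power_le_one)
  with x_neg have "0 < 2 - 2 * x * (1 - c\<^sup>2)"
    by (smt (verit) mult_nonpos_nonneg)
  moreover have "2 * x * c\<^sup>2 < 0"
    using x_neg c_pos by (simp add: mult_neg_pos)
  ultimately have "2 * x * c\<^sup>2 * (2 - 2 * x * (1 - c\<^sup>2)) < 0"
    by (simp add: mult_neg_pos)
  with constraint_square_form[OF eq] show False
    by (smt (verit) zero_le_power2)
qed

theorem theorem3p4:
  fixes X1 X2 A :: real
  assumes eq: "- 2 * Re (complex_of_real X1 + complex_of_real X2)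
      - 2 * Re (complex_of_real X1 * cnj (complex_of_real X2) * exp (- 2 * \<i> * complex_of_real A))
      + (cmod (complex_of_real X1))\<^sup>2 + (cmod (complex_of_real X2))\<^sup>2 + 1 = 0"
    and A_lo: "- pi / 2 \<le> A" and A_hi: "A \<le> pi / 2"
  shows "Re (complex_of_real X1 * exp (- \<i> * complex_of_real A)) \<ge> 0"
proof -
  have exp_2A: "exp (- 2 * \<i> * complex_of_real A) = cis (- (2 * A))"
    by (simp add: cis_conv_exp algebra_simps)
  have exp_A: "exp (- \<i> * complex_of_real A) = cis (- A)"
    by (simp add: cis_conv_exp)
  have cos_nonneg: "0 \<le> cos A"
    using A_lo A_hi by (intro cos_ge_zero) auto
  have "- 2 * X1 - 2 * X2 - 2 * X1 * X2 * (2 * (cos A)\<^sup>2 - 1) + X1\<^sup>2 + X2\<^sup>2 + 1 = 0"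
    using eq unfolding exp_2A by (simp add: cos_double_cos norm_of_real power2_abs)
  then have "0 \<le> X1 * cos A"
    using cos_nonneg by (rule constraint_imp_mult_nonneg) simp
  then show ?thesis
    unfolding exp_A by simp
qed

end
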